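(* Let $\Omega\subset\mathbb{R}^d$ be compact, $T,N\in\mathbb{N}$, let $F_{\tilde\xi_{t,n}}:\mathbb{R}^d\to\mathbb{R}^{d'}$ be affine maps and $\tilde\theta_{t,n}$ unmasked attention parameters with $d_{\mathrm{in}}(\tilde\theta_{t,n})=d'$ ($t\in[T]$, $n\in[N]$), and let $G(\mu,x)=\sum_{n=1}^N(\Gamma_{\tilde\theta_{1,n}}\diamond F_{\tilde\xi_{1,n}})(\mu,x)\odot\cdots\odot(\Gamma_{\tilde\theta_{T,n}}\diamond F_{\tilde\xi_{T,n}})(\mu,x)$. Then for every $\varepsilon>0$ there exists an MLP $\Phi:\mathbb{R}^{2d'}\to\mathbb{R}^{d'}$ such that $|G(\mu,x)-G_\Phi(\mu,x)|\le\varepsilon$ for all $(\mu,x)\in\mathcal{P}(\Omega)\times\Omega$, where, writing $g_{t,n}(\mu,x)=(\Gamma_{\tilde\theta_{t,n}}\diamond F_{\tilde\xi_{t,n}})(\mu,x)$ and $\mathbf 1_{d'}=(1,\dots,1)\in\mathbb{R}^{d'}$, $$G_\Phi(\mu,x)=\sum_{n=1}^N\Phi\Big(g_{T,n}(\mu,x),\Phi\big(g_{T-1,n}(\mu,x),\cdots\Phi\big(g_{2,n}(\mu,x),\Phi(g_{1,n}(\mu,x),\mathbf 1_{d'})\big)\cdots\big)\Big).$$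
   Context: $\odot$ is componentwise multiplication. Unmasked attention $\Gamma_\theta(\mu,x)=x+\sum_{h=1}^HW^h\int\frac{\exp(\frac1{\sqrt k}\langle Q^hx,K^hy\rangle)}{\int\exp(\frac1{\sqrt k}\langle Q^hx,K^hz\rangle)d\mu(z)}V^hy\,d\mu(y)$ with $\theta=(W^h,K^h,Q^h,V^h)_{h=1}^H$, $K^h,Q^h\in\mathbb{R}^{k\times d_{\mathrm{in}}}$, $V^h\in\mathbb{R}^{d_{\mathrm{head}}\times d_{\mathrm{in}}}$, $W^h\in\mathbb{R}^{d_{\mathrm{in}}\times d_{\mathrm{head}}}$. $(\Gamma\diamond F)(\mu,x)=\Gamma(F_\sharp\mu,F(x))$ for an affine (context-free) map $F$. An MLP is a map $A_K\circ\rho\circ\cdots\circ\rho\circ A_1$ with affine $A_j$ and componentwise ReLU activation $\rho$. *)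

theory Defs
  imports "HOL-Analysis.Analysis" "HOL-Probability.Probability"
begin

text \<open>Attention parameters with input dimension d_in = CARD('e).
  heads = H, kdim = k, hdim = d_head.
  Wm h j i : entry (j,i) of W^h (j::'e, i < d_head);
  Km h i j, Qm h i j : entries of K^h, Q^h (i < k, j::'e);
  Vm h i j : entries of V^h (i < d_head, j::'e).\<close>
record 'e attn_params =
  heads :: nat
  kdim :: nat
  hdim :: nat
  Wm :: "nat \<Rightarrow> 'e \<Rightarrow> nat \<Rightarrow> real"
  Km :: "nat \<Rightarrow> nat \<Rightarrow> 'e \<Rightarrow> real"
  Qm :: "nat \<Rightarrow> nat \<Rightarrow> 'e \<Rightarrow> real"
  Vm :: "nat \<Rightarrow> nat \<Rightarrow> 'e \<Rightarrow> real"

definition attn_score :: "('e::finite) attn_params \<Rightarrow> nat \<Rightarrow> real^'e \<Rightarrow> real^'e \<Rightarrow> real" where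
  "attn_score th h x y =
     (1 / sqrt (real (kdim th))) *
     (\<Sum>i<kdim th. (\<Sum>l\<in>UNIV. Qm th h i l * x$l) * (\<Sum>l\<in>UNIV. Km th h i l * y$l))"

definition Gamma :: "('e::finite) attn_params \<Rightarrow> (real^'e) measure \<Rightarrow> real^'e \<Rightarrow> real^'e" where
  "Gamma th \<mu> x = x + (\<Sum>h\<in>{1..heads th}. (\<chi> j. \<Sum>i<hdim th. Wm th h j i *
       (\<integral>y. (exp (attn_score th h x y) / (\<integral>z. exp (attn_score th h x z) \<partial>\<mu>))
              * (\<Sum>l\<in>UNIV. Vm th h i l * y$l) \<partial>\<mu>)))"

definition Gamma_diamond :: "('e::finite) attn_params \<Rightarrow> (real^'d \<Rightarrow> real^'e) \<Rightarrow> (real^'d::finite) measure \<Rightarrow> real^'d \<Rightarrow> real^'e" where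
  "Gamma_diamond th F \<mu> x = Gamma th (distr \<mu> borel F) (F x)"

definition prob_on :: "('a::topological_space) set \<Rightarrow> 'a measure \<Rightarrow> bool" where
  "prob_on \<Omega> \<mu> \<longleftrightarrow> prob_space \<mu> \<and> sets \<mu> = sets borel \<and> emeasure \<mu> \<Omega> = 1"

definition relu :: "(nat \<Rightarrow> real) \<Rightarrow> nat \<Rightarrow> real" where
  "relu v = (\<lambda>i. max 0 (v i))"

text \<open>Hidden layers: (A, b, m) is the affine map v \<mapsto> A v + b reading the first m
  input coordinates; each hidden layer is followed by ReLU.\<close>
fun eval_hidden :: "((nat \<Rightarrow> nat \<Rightarrow> real) \<times> (nat \<Rightarrow> real) \<times> nat) list \<Rightarrow> (nat \<Rightarrow> real) \<Rightarrow> (nat \<Rightarrow> real)" where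
  "eval_hidden [] v = v"
| "eval_hidden ((A, b, m) # Ls) v = eval_hidden Ls (relu (\<lambda>i. b i + (\<Sum>j<m. A i j * v j)))"

text \<open>An MLP A_K o rho o ... o rho o A_1 from real^'a to real^'b:
  either K = 1 (a single affine map) or K >= 2 with first layer A_1 into nat-indexed
  hidden coordinates, further hidden layers, and last layer A_K reading m coordinates.\<close>
definition is_mlp :: "(real^'a::finite \<Rightarrow> real^'b::finite) \<Rightarrow> bool" where
  "is_mlp \<Phi> \<longleftrightarrow>
     (\<exists>(A :: real^'a^'b) b. \<Phi> = (\<lambda>v. A *v v + b)) \<or>
     (\<exists>(A1 :: nat \<Rightarrow> 'a \<Rightarrow> real) (b1 :: nat \<Rightarrow> real) Ls (AK :: 'b \<Rightarrow> nat \<Rightarrow> real) (bK :: real^'b) m.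
        \<Phi> = (\<lambda>v. let h = eval_hidden Ls (relu (\<lambda>i. b1 i + (\<Sum>j\<in>UNIV. A1 i j * v$j)))
                 in (\<chi> j. bK$j + (\<Sum>i<m. AK j i * h i))))"

definition vconcat :: "real^'e \<Rightarrow> real^'e \<Rightarrow> real^('e + 'e)" where
  "vconcat u w = (\<chi> s. case s of Inl j \<Rightarrow> u$j | Inr j \<Rightarrow> w$j)"

fun nest_mlp :: "(real^('e + 'e) \<Rightarrow> real^'e) \<Rightarrow> (nat \<Rightarrow> real^'e) \<Rightarrow> nat \<Rightarrow> real^('e::finite)" where
  "nest_mlp \<Phi> g 0 = (\<chi> j. 1)"
| "nest_mlp \<Phi> g (Suc t) = \<Phi> (vconcat (g (Suc t)) (nest_mlp \<Phi> g t))"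

end

theory Submission
  imports Defs
begin

text \<open>Every factor \<open>g\<^sub>t\<^sub>,\<^sub>n(\<mu>, x)\<close> is bounded uniformly on \<open>\<P>(\<Omega>) \<times> \<Omega>\<close>, say by \<open>B \<ge> 1\<close>:
  the push-forward of \<open>\<mu>\<close> under the affine map \<open>F\<close> lives in a ball containing \<open>F(\<Omega>)\<close>, so the
  attention scores are bounded by some \<open>S\<close>, the softmax weights by \<open>e\<^sup>2\<^sup>S\<close>, and the value
  vectors by a constant.
  A one-hidden-layer ReLU network \<open>\<Phi>\<close> multiplies componentwise up to an error \<open>\<delta>\<close> on a cube
  \<open>[-M, M]\<close>: by polarization it suffices to approximate \<open>s\<^sup>2\<close>, and its piecewise linear interpolant
  with mesh \<open>\<surd>\<delta>\<close> is a combination of ReLUs.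
  Feeding the factors into \<open>\<Phi>\<close> one at a time, the error after \<open>t\<close> steps is at most \<open>t \<delta> B\<^sup>t\<close>,
  since each step adds \<open>\<delta>\<close> and multiplies the previous error by a factor bounded by \<open>B\<close>;
  in particular all intermediate values stay in the cube. Choosing \<open>\<delta>\<close> small enough makes the
  total error \<open>N d' T \<delta> B\<^sup>T\<close> of the sum at most \<open>\<epsilon>\<close>.\<close>

section \<open>Boundedness of attention layers\<close>

lemma abs_softmax_weighted_integral_le:
  fixes \<nu> :: "'a measure" and s L :: "'a \<Rightarrow> real"
  assumes \<nu>: "prob_space \<nu>" and bounds: "AE y in \<nu>. \<bar>s y\<bar> \<le> S \<and> \<bar>L y\<bar> \<le> C" and "0 \<le> C"
  shows "\<bar>\<integral>y. (exp (s y) / (\<integral>z. exp (s z) \<partial>\<nu>)) * L y \<partial>\<nu>\<bar> \<le> exp (2 * S) * C"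
proof -
  define Z where "Z = (\<integral>z. exp (s z) \<partial>\<nu>)"
  show ?thesis
  proof (cases "integrable \<nu> (\<lambda>z. exp (s z))")
    case False
    then show ?thesis using \<open>0 \<le> C\<close> by (simp add: not_integrable_integral_eq)
  next
    case True
    have Z_ge: "exp (- S) \<le> Z" unfolding Z_def
      by (rule prob_space.integral_ge_const[OF \<nu> True]) (use bounds in \<open>auto elim!: eventually_mono\<close>)
    then have "0 < Z" by (smt (verit) exp_gt_zero)
    have pointwise: "AE y in \<nu>. \<bar>exp (s y) / Z * L y\<bar> \<le> exp (2 * S) * C"
      using bounds
    proof (rule eventually_mono)
      fix y assume y: "\<bar>s y\<bar> \<le> S \<and> \<bar>L y\<bar> \<le> C"
      have "\<bar>exp (s y) / Z * L y\<bar> = exp (s y) / Z * \<bar>L y\<bar>" using \<open>0 < Z\<close> by (simp add: abs_mult)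
      also have "\<dots> \<le> exp S / exp (- S) * C"
        using y \<open>0 < Z\<close> Z_ge \<open>0 \<le> C\<close> by (intro mult_mono frac_le) auto
      also have "\<dots> = exp (2 * S) * C" by (simp add: exp_minus field_simps mult_exp_exp)
      finally show "\<bar>exp (s y) / Z * L y\<bar> \<le> exp (2 * S) * C" .
    qed
    have "\<bar>\<integral>y. exp (s y) / Z * L y \<partial>\<nu>\<bar> \<le> (\<integral>y. \<bar>exp (s y) / Z * L y\<bar> \<partial>\<nu>)"
      using integral_norm_bound[of \<nu> "\<lambda>y. exp (s y) / Z * L y"] by simp
    also have "\<dots> \<le> exp (2 * S) * C"
    proof (cases "integrable \<nu> (\<lambda>y. \<bar>exp (s y) / Z * L y\<bar>)")
      case True
      then show ?thesis using prob_space.integral_le_const[OF \<nu> True pointwise] by simp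
    next
      case False
      then show ?thesis using \<open>0 \<le> C\<close> not_integrable_integral_eq[OF False] by (simp del: abs_divide abs_mult)
    qed
    finally show ?thesis unfolding Z_def .
  qed
qed

lemma abs_linear_form_le:
  fixes y :: "real^'n::finite"
  assumes "norm y \<le> R"
  shows "\<bar>\<Sum>l\<in>UNIV. a l * y$l\<bar> \<le> (\<Sum>l\<in>UNIV. \<bar>a l\<bar>) * R"
proof -
  have "\<bar>\<Sum>l\<in>UNIV. a l * y$l\<bar> \<le> (\<Sum>l\<in>UNIV. \<bar>a l\<bar> * \<bar>y$l\<bar>)"
    unfolding abs_mult[symmetric] by (rule sum_abs)
  also have "\<dots> \<le> (\<Sum>l\<in>UNIV. \<bar>a l\<bar> * R)"
    by (intro sum_mono mult_left_mono order_trans[OF component_le_norm_cart assms]) simp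
  finally show ?thesis by (simp add: sum_distrib_right)
qed

definition attn_score_bound :: "('e::finite) attn_params \<Rightarrow> nat \<Rightarrow> real \<Rightarrow> real" where
  "attn_score_bound th h R = (1 / sqrt (real (kdim th))) *
     (\<Sum>i<kdim th. ((\<Sum>l\<in>UNIV. \<bar>Qm th h i l\<bar>) * R) * ((\<Sum>l\<in>UNIV. \<bar>Km th h i l\<bar>) * R))"

lemma abs_attn_score_le:
  fixes x y :: "real^'e::finite"
  assumes x: "norm x \<le> R" and y: "norm y \<le> R"
  shows "\<bar>attn_score th h x y\<bar> \<le> attn_score_bound th h R"
proof -
  have "0 \<le> R" using x norm_ge_zero order_trans by blast
  have "\<bar>\<Sum>i<kdim th. (\<Sum>l\<in>UNIV. Qm th h i l * x$l) * (\<Sum>l\<in>UNIV. Km th h i l * y$l)\<bar>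
      \<le> (\<Sum>i<kdim th. \<bar>\<Sum>l\<in>UNIV. Qm th h i l * x$l\<bar> * \<bar>\<Sum>l\<in>UNIV. Km th h i l * y$l\<bar>)"
    unfolding abs_mult[symmetric] by (rule sum_abs)
  also have "\<dots> \<le> (\<Sum>i<kdim th. ((\<Sum>l\<in>UNIV. \<bar>Qm th h i l\<bar>) * R) * ((\<Sum>l\<in>UNIV. \<bar>Km th h i l\<bar>) * R))"
    using abs_linear_form_le[OF x] abs_linear_form_le[OF y] \<open>0 \<le> R\<close>
    by (intro sum_mono mult_mono) (auto intro!: mult_nonneg_nonneg sum_nonneg)
  finally show ?thesis
    unfolding attn_score_def attn_score_bound_def abs_mult by (simp add: divide_right_mono)
qed

lemma Gamma_component_le:
  fixes \<nu> :: "(real^'e::finite) measure"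
  assumes \<nu>: "prob_space \<nu>" and support: "AE y in \<nu>. norm y \<le> R" and x: "norm x \<le> R"
  shows "\<bar>Gamma th \<nu> x $ j\<bar> \<le> R + (\<Sum>h\<in>{1..heads th}. \<Sum>i<hdim th.
           \<bar>Wm th h j i\<bar> * (exp (2 * attn_score_bound th h R) * ((\<Sum>l\<in>UNIV. \<bar>Vm th h i l\<bar>) * R)))"
proof -
  have "0 \<le> R" using x norm_ge_zero order_trans by blast
  have head: "\<bar>\<integral>y. (exp (attn_score th h x y) / (\<integral>z. exp (attn_score th h x z) \<partial>\<nu>))
              * (\<Sum>l\<in>UNIV. Vm th h i l * y$l) \<partial>\<nu>\<bar>
      \<le> exp (2 * attn_score_bound th h R) * ((\<Sum>l\<in>UNIV. \<bar>Vm th h i l\<bar>) * R)" for h i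
    using support \<open>0 \<le> R\<close>
    by (intro abs_softmax_weighted_integral_le[OF \<nu>])
       (auto elim!: eventually_mono intro: abs_attn_score_le[OF x] abs_linear_form_le)
  show ?thesis
    unfolding Gamma_def vector_add_component sum_component vec_lambda_beta
    apply (rule order_trans[OF abs_triangle_ineq add_mono[OF order_trans[OF component_le_norm_cart x]]])
    apply (rule order_trans[OF sum_abs sum_mono], rule order_trans[OF sum_abs sum_mono])
    unfolding abs_mult by (rule mult_left_mono[OF head]) simp
qed

lemma AE_distr_norm_le:
  fixes F :: "'a::topological_space \<Rightarrow> 'b::real_normed_vector"
  assumes \<mu>: "prob_on \<Omega> \<mu>" and "closed \<Omega>" and F: "F \<in> borel_measurable borel"
    and R: "\<And>x. x \<in> \<Omega> \<Longrightarrow> norm (F x) \<le> R"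
  shows "AE y in distr \<mu> borel F. norm y \<le> R"
proof -
  have ps: "prob_space \<mu>" and sets: "sets \<mu> = sets borel" and "emeasure \<mu> \<Omega> = 1"
    using \<mu> unfolding prob_on_def by auto
  have F\<mu>: "F \<in> borel_measurable \<mu>" using F measurable_cong_sets[OF sets refl] by blast
  have "measure \<mu> \<Omega> = 1" using \<open>emeasure \<mu> \<Omega> = 1\<close> by (simp add: measure_def)
  then have "AE x in \<mu>. x \<in> \<Omega>" by (rule prob_space.AE_prob_1[OF ps])
  then have "AE x in \<mu>. norm (F x) \<le> R" by (rule eventually_mono) (rule R)
  moreover have "{y \<in> space borel. norm y \<le> R} \<in> sets borel"
    using borel_closed[OF closed_cball[of 0 R]] by (simp add: cball_def dist_norm)
  ultimately show ?thesis using AE_distr_iff[OF F\<mu>, of "\<lambda>y. norm y \<le> R"] by simp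
qed

lemma Gamma_diamond_bounded:
  fixes \<Omega> :: "(real^'d::finite) set" and F :: "real^'d \<Rightarrow> real^'e::finite"
  assumes "compact \<Omega>" and F: "continuous_on UNIV F"
  shows "\<exists>B. \<forall>\<mu> x j. prob_on \<Omega> \<mu> \<longrightarrow> x \<in> \<Omega> \<longrightarrow> \<bar>Gamma_diamond th F \<mu> x $ j\<bar> \<le> B"
proof -
  have "compact (F ` \<Omega>)" using compact_continuous_image continuous_on_subset F \<open>compact \<Omega>\<close> by blast
  then obtain R where R: "\<And>x. x \<in> \<Omega> \<Longrightarrow> norm (F x) \<le> R"
    using compact_imp_bounded bounded_iff by (metis image_eqI)
  define B where "B j = R + (\<Sum>h\<in>{1..heads th}. \<Sum>i<hdim th.
           \<bar>Wm th h j i\<bar> * (exp (2 * attn_score_bound th h R) * ((\<Sum>l\<in>UNIV. \<bar>Vm th h i l\<bar>) * R)))" for j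
  have "\<bar>Gamma_diamond th F \<mu> x $ j\<bar> \<le> (\<Sum>j\<in>UNIV. \<bar>B j\<bar>)" if \<mu>: "prob_on \<Omega> \<mu>" and x: "x \<in> \<Omega>" for \<mu> x j
  proof -
    have F_meas: "F \<in> borel_measurable borel" by (rule borel_measurable_continuous_onI[OF F])
    have "sets \<mu> = sets borel" "prob_space \<mu>" using \<mu> unfolding prob_on_def by auto
    then have "prob_space (distr \<mu> borel F)"
      using F_meas measurable_cong_sets prob_space.prob_space_distr by blast
    moreover have "AE y in distr \<mu> borel F. norm y \<le> R"
      using AE_distr_norm_le[OF \<mu> compact_imp_closed[OF \<open>compact \<Omega>\<close>] F_meas R] .
    ultimately have "\<bar>Gamma_diamond th F \<mu> x $ j\<bar> \<le> B j"
      unfolding Gamma_diamond_def B_def using R[OF x] by (rule Gamma_component_le)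
    also have "\<dots> \<le> (\<Sum>j\<in>UNIV. \<bar>B j\<bar>)" using member_le_sum[of j UNIV "\<lambda>j. \<bar>B j\<bar>"] by simp
    finally show ?thesis .
  qed
  then show ?thesis by blast
qed

lemma finite_family_uniform_bound:
  assumes "finite I" and "\<And>i. i \<in> I \<Longrightarrow> \<exists>B. \<forall>z. P z \<longrightarrow> \<bar>f i z\<bar> \<le> B"
  obtains B :: real where "1 \<le> B" "\<And>i z. i \<in> I \<Longrightarrow> P z \<Longrightarrow> \<bar>f i z\<bar> \<le> B"
proof -
  have "\<forall>i\<in>I. \<exists>B. \<forall>z. P z \<longrightarrow> \<bar>f i z\<bar> \<le> B" using assms(2) by blast
  then obtain b where b: "\<forall>i\<in>I. \<forall>z. P z \<longrightarrow> \<bar>f i z\<bar> \<le> b i" by (rule bchoice[THEN exE])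
  have "b i \<le> (\<Sum>i\<in>I. \<bar>b i\<bar>)" if "i \<in> I" for i
    using member_le_sum[OF that, of "\<lambda>i. \<bar>b i\<bar>"] \<open>finite I\<close> by simp
  then have "\<bar>f i z\<bar> \<le> 1 + (\<Sum>i\<in>I. \<bar>b i\<bar>)" if "i \<in> I" "P z" for i z
    using b that by (smt (verit))
  moreover have "1 \<le> 1 + (\<Sum>i\<in>I. \<bar>b i\<bar>)" by (simp add: sum_nonneg)
  ultimately show ?thesis using that by blast
qed

lemma Gamma_diamond_affine_uniform_bound:
  fixes \<Omega> :: "(real^'d::finite) set" and \<theta> :: "nat \<Rightarrow> nat \<Rightarrow> ('e::finite) attn_params"
    and FA :: "nat \<Rightarrow> nat \<Rightarrow> real^'d^'e" and Fb :: "nat \<Rightarrow> nat \<Rightarrow> real^'e"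
  assumes "compact \<Omega>"
  obtains B :: real where "1 \<le> B" "\<And>t n \<mu> x j. t \<in> {1..T} \<Longrightarrow> n \<in> {1..N} \<Longrightarrow> prob_on \<Omega> \<mu> \<Longrightarrow> x \<in> \<Omega> \<Longrightarrow>
      \<bar>Gamma_diamond (\<theta> t n) (\<lambda>z. FA t n *v z + Fb t n) \<mu> x $ j\<bar> \<le> B"
proof -
  define P where "P = (\<lambda>(\<mu>, x, j :: 'e). prob_on \<Omega> \<mu> \<and> x \<in> \<Omega>)"
  define f where "f = (\<lambda>(t, n) (\<mu>, x, j). Gamma_diamond (\<theta> t n) (\<lambda>z. FA t n *v z + Fb t n) \<mu> x $ j)"
  have bounded: "\<exists>B. \<forall>\<mu> x j. prob_on \<Omega> \<mu> \<longrightarrow> x \<in> \<Omega> \<longrightarrow> \<bar>Gamma_diamond (\<theta> t n) (\<lambda>z. FA t n *v z + Fb t n) \<mu> x $ j\<bar> \<le> B"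
    for t n
    using \<open>compact \<Omega>\<close> by (intro Gamma_diamond_bounded continuous_intros matrix_vector_mult_linear_continuous_on)
  have "\<exists>B. \<forall>z. P z \<longrightarrow> \<bar>f p z\<bar> \<le> B" for p
    using bounded[of "fst p" "snd p"] unfolding P_def f_def by (auto simp: split_beta)
  then obtain B where "1 \<le> B" and uniform: "\<And>p z. p \<in> {1..T} \<times> {1..N} \<Longrightarrow> P z \<Longrightarrow> \<bar>f p z\<bar> \<le> B"
    using finite_family_uniform_bound[of "{1..T} \<times> {1..N}" P f] by blast
  show ?thesis
  proof (rule that[OF \<open>1 \<le> B\<close>])
    fix t n \<mu> x j assume "t \<in> {1..T}" "n \<in> {1..N}" "prob_on \<Omega> \<mu>" "x \<in> \<Omega>"
    then show "\<bar>Gamma_diamond (\<theta> t n) (\<lambda>z. FA t n *v z + Fb t n) \<mu> x $ j\<bar> \<le> B"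
      using uniform[of "(t, n)" "(\<mu>, x, j)"] unfolding P_def f_def by simp
  qed
qed

section \<open>A ReLU network approximating the componentwise product\<close>

text \<open>On \<open>[0, K h]\<close>, \<open>relu_square h K\<close> is the piecewise linear interpolant of \<open>s\<^sup>2\<close>
  at the nodes \<open>k h\<close>: its slopes are \<open>h, 3 h, 5 h, \<dots>\<close>, whence the coefficients
  \<open>h, 2 h, 2 h, \<dots>\<close> of the ReLU terms.\<close>
definition relu_square_coeff :: "real \<Rightarrow> nat \<Rightarrow> real" where
  "relu_square_coeff h k = (if k = 0 then h else 2 * h)"

definition relu_square :: "real \<Rightarrow> nat \<Rightarrow> real \<Rightarrow> real" where
  "relu_square h K s = (\<Sum>k<K. relu_square_coeff h k * max 0 (s - real k * h))"

lemma relu_square_coeff_partial_sum: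
  "(\<Sum>k<Suc j. relu_square_coeff h k * (s - real k * h)) = (2 * real j + 1) * h * s - h * h * real j * (real j + 1)"
  by (induction j) (auto simp: relu_square_coeff_def algebra_simps)

lemma abs_relu_square_sub_le:
  assumes h: "h > 0" and s: "0 \<le> s" "s < real K * h"
  shows "\<bar>relu_square h K s - s * s\<bar> \<le> h * h"
proof -
  define j where "j = nat \<lfloor>s / h\<rfloor>"
  have "real j \<le> s / h" "s / h < real j + 1" unfolding j_def using s h by (auto simp: of_nat_nat)
  then have j: "real j * h \<le> s" "s < (real j + 1) * h" using h by (auto simp: field_simps)
  have "j < K"
  proof (rule ccontr)
    assume "\<not> j < K"
    then have "real K * h \<le> real j * h" using h by auto
    then show False using j s by linarith
  qed
  have "relu_square h K s = (\<Sum>k<Suc j. relu_square_coeff h k * max 0 (s - real k * h))"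
    unfolding relu_square_def
  proof (rule sum.mono_neutral_right)
    show "\<forall>k\<in>{..<K} - {..<Suc j}. relu_square_coeff h k * max 0 (s - real k * h) = 0"
    proof
      fix k assume "k \<in> {..<K} - {..<Suc j}"
      then have "(real j + 1) * h \<le> real k * h" using h by (intro mult_right_mono) auto
      then show "relu_square_coeff h k * max 0 (s - real k * h) = 0" using j by auto
    qed
  qed (use \<open>j < K\<close> in auto)
  also have "\<dots> = (\<Sum>k<Suc j. relu_square_coeff h k * (s - real k * h))"
  proof (rule sum.cong[OF refl])
    fix k assume "k \<in> {..<Suc j}"
    then have "real k * h \<le> real j * h" using h by (intro mult_right_mono) auto
    then show "relu_square_coeff h k * max 0 (s - real k * h) = relu_square_coeff h k * (s - real k * h)"
      using j by auto
  qed
  finally have "s * s - relu_square h K s = (s - real j * h) * (s - (real j + 1) * h)"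
    unfolding relu_square_coeff_partial_sum by (simp add: algebra_simps)
  moreover have "\<bar>(s - real j * h) * (s - (real j + 1) * h)\<bar> \<le> h * h"
    unfolding abs_mult using j h by (intro mult_mono) (auto simp: algebra_simps)
  ultimately show ?thesis by (simp add: abs_minus_commute)
qed

lemma relu_square_nonpos:
  assumes "h > 0" and "s \<le> 0"
  shows "relu_square h K s = 0"
proof -
  have "s - real k * h \<le> 0" for k using assms by (smt (verit) mult_nonneg_nonneg of_nat_0_le_iff)
  then show ?thesis unfolding relu_square_def by (simp add: max_absorb1)
qed

lemma abs_relu_square_even_sub_le:
  assumes h: "h > 0" and s: "\<bar>s\<bar> < real K * h"
  shows "\<bar>relu_square h K s + relu_square h K (- s) - s * s\<bar> \<le> h * h"
proof (cases "s \<ge> 0")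
  case True
  then show ?thesis using abs_relu_square_sub_le[OF h True] relu_square_nonpos[OF h, of "- s"] s by auto
next
  case False
  then show ?thesis using abs_relu_square_sub_le[OF h, of "- s"] relu_square_nonpos[OF h, of s] s by auto
qed

lemma abs_relu_polarization_sub_le:
  assumes h: "h > 0" and "\<bar>u\<bar> \<le> M" "\<bar>w\<bar> \<le> M" and K: "2 * M < real K * h"
  shows "\<bar>(relu_square h K (u + w) + relu_square h K (- (u + w))
          - relu_square h K (u - w) - relu_square h K (- (u - w))) / 4 - u * w\<bar> \<le> h * h / 2"
proof -
  have "\<bar>u + w\<bar> < real K * h" "\<bar>u - w\<bar> < real K * h" using assms by linarith+
  note plus = abs_relu_square_even_sub_le[OF h this(1)] and minus = abs_relu_square_even_sub_le[OF h this(2)]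
  have "u * w = ((u + w) * (u + w) - (u - w) * (u - w)) / 4" by (simp add: algebra_simps)
  then show ?thesis using plus minus by (simp add: field_simps abs_le_iff)
qed

lemma hidden_index_decode:
  fixes a c k K :: nat
  assumes "c < 4" "k < K"
  defines "i \<equiv> c + 4 * (k + K * a)"
  shows "i mod 4 = c" "i div 4 mod K = k" "i div 4 div K = a"
proof -
  show "i mod 4 = c" unfolding i_def using \<open>c < 4\<close> by (simp only: mod_mult_self2) simp
  have "i div 4 = k + K * a" unfolding i_def using \<open>c < 4\<close> by simp
  then show "i div 4 mod K = k" "i div 4 div K = a" using \<open>k < K\<close> by simp_all
qed

lemma sum_block_reindex:
  fixes G :: "nat \<Rightarrow> real"
  assumes "0 < K" "a < n" and support: "\<And>i. G i \<noteq> 0 \<Longrightarrow> i div 4 div K = a"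
  shows "(\<Sum>i<4 * K * n. G i) = (\<Sum>k<K. \<Sum>c<4. G (c + 4 * (k + K * a)))"
proof -
  define \<iota> where "\<iota> = (\<lambda>(k, c). c + 4 * (k + K * a))"
  define S where "S = {..<K} \<times> {..<4::nat}"
  have decode: "\<iota> (k, c) mod 4 = c \<and> \<iota> (k, c) div 4 mod K = k" if "(k, c) \<in> S" for k c
    using hidden_index_decode[of c k K a] that unfolding \<iota>_def S_def by auto
  have "inj_on \<iota> S"
  proof (rule inj_onI)
    fix p q assume "p \<in> S" "q \<in> S" and eq: "\<iota> p = \<iota> q"
    obtain k c k' c' where pq: "p = (k, c)" "q = (k', c')" by fastforce
    have "\<iota> p mod 4 = c \<and> \<iota> p div 4 mod K = k" using decode[of k c] \<open>p \<in> S\<close> pq by simp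
    moreover have "\<iota> p mod 4 = c' \<and> \<iota> p div 4 mod K = k'" using decode[of k' c'] \<open>q \<in> S\<close> pq eq by simp
    ultimately show "p = q" using pq by simp
  qed
  moreover have "\<iota> ` S \<subseteq> {..<4 * K * n}"
  proof
    fix i assume "i \<in> \<iota> ` S"
    then obtain k c where kc: "k < K" "c < 4" "i = c + 4 * (k + K * a)" unfolding S_def \<iota>_def by auto
    have "k + K * a < K * (a + 1)" using kc by simp
    also have "\<dots> \<le> K * n" using \<open>a < n\<close> by (intro mult_left_mono) auto
    finally show "i \<in> {..<4 * K * n}" using kc by simp
  qed
  moreover have "G i = 0" if "i \<notin> \<iota> ` S" for i
  proof (rule ccontr)
    assume "G i \<noteq> 0"
    then have a: "i div 4 div K = a" by (rule support)
    have "i div 4 mod K + K * a = i div 4" using mod_mult_div_eq[of "i div 4" K] unfolding a .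
    then have "i = \<iota> (i div 4 mod K, i mod 4)" unfolding \<iota>_def prod.case by (simp add: mod_mult_div_eq)
    moreover have "(i div 4 mod K, i mod 4) \<in> S" unfolding S_def using \<open>0 < K\<close> by auto
    ultimately show False using that by blast
  qed
  ultimately have "(\<Sum>i<4 * K * n. G i) = (\<Sum>p\<in>S. G (\<iota> p))"
    by (subst sum.mono_neutral_right[of _ "\<iota> ` S"]) (auto simp: sum.reindex)
  then show ?thesis unfolding S_def \<iota>_def by (simp add: sum.cartesian_product split_def)
qed

lemma sum_UNIV_Plus:
  "(\<Sum>s\<in>(UNIV :: ('a::finite + 'b::finite) set). f s) = (\<Sum>j\<in>UNIV. f (Inl j)) + (\<Sum>j\<in>UNIV. f (Inr j))"
  using sum.Plus[of "UNIV :: 'a set" "UNIV :: 'b set" f] by (simp add: comp_def)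

text \<open>The product network evaluates \<open>u\<^sub>j w\<^sub>j = ((u\<^sub>j + w\<^sub>j)\<^sup>2 - (u\<^sub>j - w\<^sub>j)\<^sup>2) / 4\<close>
  with \<open>relu_square\<close>. Coordinates are enumerated by an injection \<open>idx\<close> into \<open>{..<n}\<close>,
  and hidden unit \<open>c + 4 (k + K idx j)\<close> computes the \<open>k\<close>-th ReLU term of \<open>relu_square\<close>
  at the \<open>c\<close>-th of \<open>u\<^sub>j + w\<^sub>j, -(u\<^sub>j + w\<^sub>j), u\<^sub>j - w\<^sub>j, -(u\<^sub>j - w\<^sub>j)\<close>.\<close>
definition polar_sign_u :: "nat \<Rightarrow> real" where
  "polar_sign_u c = (if c = 0 \<or> c = 2 then 1 else -1)"

definition polar_sign_w :: "nat \<Rightarrow> real" where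
  "polar_sign_w c = (if c = 0 \<or> c = 3 then 1 else -1)"

definition polar_weight :: "nat \<Rightarrow> real" where
  "polar_weight c = (if c < 2 then 1 / 4 else - 1 / 4)"

definition product_net_in :: "('e \<Rightarrow> nat) \<Rightarrow> nat \<Rightarrow> nat \<Rightarrow> 'e + 'e \<Rightarrow> real" where
  "product_net_in idx K i s = (case s of
       Inl j \<Rightarrow> if idx j = i div 4 div K then polar_sign_u (i mod 4) else 0
     | Inr j \<Rightarrow> if idx j = i div 4 div K then polar_sign_w (i mod 4) else 0)"

definition product_net_bias :: "real \<Rightarrow> nat \<Rightarrow> nat \<Rightarrow> real" where
  "product_net_bias h K i = - real (i div 4 mod K) * h"

definition product_net_out :: "('e \<Rightarrow> nat) \<Rightarrow> real \<Rightarrow> nat \<Rightarrow> 'e \<Rightarrow> nat \<Rightarrow> real" where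
  "product_net_out idx h K j i =
     (if idx j = i div 4 div K then polar_weight (i mod 4) * relu_square_coeff h (i div 4 mod K) else 0)"

definition product_net :: "('e::finite \<Rightarrow> nat) \<Rightarrow> nat \<Rightarrow> real \<Rightarrow> nat \<Rightarrow> real^('e + 'e) \<Rightarrow> real^'e" where
  "product_net idx n h K v = (\<chi> j. \<Sum>i<4 * K * n. product_net_out idx h K j i *
     relu (\<lambda>i. product_net_bias h K i + (\<Sum>s\<in>UNIV. product_net_in idx K i s * v $ s)) i)"

lemma is_mlp_product_net: "is_mlp (product_net idx n h K)"
  unfolding is_mlp_def
  apply (rule disjI2)
  apply (rule exI[of _ "product_net_in idx K"], rule exI[of _ "product_net_bias h K"], rule exI[of _ "[]"],
         rule exI[of _ "product_net_out idx h K"], rule exI[of _ 0], rule exI[of _ "4 * K * n"])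
  by (simp add: product_net_def fun_eq_iff)

lemma product_net_input:
  fixes idx :: "'e::finite \<Rightarrow> nat" and j :: 'e
  assumes "inj idx" "c < 4" "k < K"
  defines "i \<equiv> c + 4 * (k + K * idx j)"
  shows "(\<Sum>s\<in>UNIV. product_net_in idx K i s * vconcat u w $ s) = polar_sign_u c * u$j + polar_sign_w c * w$j"
proof -
  note decode = hidden_index_decode[OF \<open>c < 4\<close> \<open>k < K\<close>, of "idx j", folded i_def]
  have "idx j' = idx j \<longleftrightarrow> j' = j" for j' using \<open>inj idx\<close> by (auto dest: injD)
  then have "product_net_in idx K i (Inl j') * u$j' = (if j' = j then polar_sign_u c * u$j else 0)"
    and "product_net_in idx K i (Inr j') * w$j' = (if j' = j then polar_sign_w c * w$j else 0)" for j'
    unfolding product_net_in_def decode by auto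
  then show ?thesis unfolding sum_UNIV_Plus vconcat_def by simp
qed

lemma product_net_eq:
  fixes idx :: "'e::finite \<Rightarrow> nat"
  assumes "inj idx" and idx: "\<And>j. idx j < n" and "0 < K"
  shows "product_net idx n h K (vconcat u w) $ j =
    (relu_square h K (u$j + w$j) + relu_square h K (- (u$j + w$j))
     - relu_square h K (u$j - w$j) - relu_square h K (- (u$j - w$j))) / 4"
proof -
  define G where "G i = product_net_out idx h K j i *
     relu (\<lambda>i. product_net_bias h K i + (\<Sum>s\<in>UNIV. product_net_in idx K i s * vconcat u w $ s)) i" for i
  have "G i \<noteq> 0 \<Longrightarrow> i div 4 div K = idx j" for i
    unfolding G_def product_net_out_def by (auto split: if_splits)
  then have "product_net idx n h K (vconcat u w) $ j = (\<Sum>k<K. \<Sum>c<4. G (c + 4 * (k + K * idx j)))"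
    unfolding product_net_def vec_lambda_beta G_def[symmetric] by (rule sum_block_reindex[OF \<open>0 < K\<close> idx])
  also have "\<dots> = (\<Sum>k<K. \<Sum>c<4.
      polar_weight c * relu_square_coeff h k * max 0 (polar_sign_u c * u$j + polar_sign_w c * w$j - real k * h))"
  proof (intro sum.cong refl)
    fix k c assume "k \<in> {..<K}" "c \<in> {..<4::nat}"
    then have "c < 4" "k < K" by auto
    note decode = hidden_index_decode[OF this, of "idx j"]
    show "G (c + 4 * (k + K * idx j)) = polar_weight c * relu_square_coeff h k *
        max 0 (polar_sign_u c * u$j + polar_sign_w c * w$j - real k * h)"
      unfolding G_def product_net_out_def product_net_bias_def relu_def decode
        product_net_input[OF \<open>inj idx\<close> \<open>c < 4\<close> \<open>k < K\<close>] by (simp add: algebra_simps)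
  qed
  also have "\<dots> = (\<Sum>k<K. relu_square_coeff h k * max 0 ((u$j + w$j) - real k * h)
      + relu_square_coeff h k * max 0 (- (u$j + w$j) - real k * h)
      - relu_square_coeff h k * max 0 ((u$j - w$j) - real k * h)
      - relu_square_coeff h k * max 0 (- (u$j - w$j) - real k * h)) / 4"
    unfolding sum_divide_distrib
    by (intro sum.cong refl)
       (simp add: eval_nat_numeral polar_sign_u_def polar_sign_w_def polar_weight_def algebra_simps)
  also have "\<dots> = (relu_square h K (u$j + w$j) + relu_square h K (- (u$j + w$j))
     - relu_square h K (u$j - w$j) - relu_square h K (- (u$j - w$j))) / 4"
    unfolding relu_square_def by (simp add: sum_subtractf sum.distrib)
  finally show ?thesis .
qed

lemma exists_mlp_approx_product:
  assumes "0 \<le> M" "0 < \<delta>"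
  shows "\<exists>\<Phi> :: real^('e::finite + 'e) \<Rightarrow> real^'e. is_mlp \<Phi> \<and>
     (\<forall>u w j. \<bar>u$j\<bar> \<le> M \<longrightarrow> \<bar>w$j\<bar> \<le> M \<longrightarrow> \<bar>\<Phi> (vconcat u w) $ j - u$j * w$j\<bar> \<le> \<delta>)"
proof -
  obtain idx :: "'e \<Rightarrow> nat" and n where "idx ` UNIV = {i. i < n}" "inj idx"
    using finite_imp_inj_to_nat_seg[of "UNIV :: 'e set"] by auto
  then have idx: "idx j < n" for j by auto
  define h where "h = sqrt \<delta>"
  have h: "0 < h" "h * h = \<delta>" unfolding h_def using \<open>0 < \<delta>\<close> by auto
  define K where "K = nat \<lceil>2 * M / h\<rceil> + 1"
  have "2 * M / h < real K" unfolding K_def by linarith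
  then have K: "2 * M < real K * h" using h by (simp add: field_simps)
  have "0 < K" unfolding K_def by simp
  have "\<bar>product_net idx n h K (vconcat u w) $ j - u$j * w$j\<bar> \<le> \<delta>"
    if "\<bar>u$j\<bar> \<le> M" "\<bar>w$j\<bar> \<le> M" for u w :: "real^'e" and j
    unfolding product_net_eq[OF \<open>inj idx\<close> idx \<open>0 < K\<close>]
    using abs_relu_polarization_sub_le[OF h(1) that K] h \<open>0 < \<delta>\<close> by linarith
  then show ?thesis using is_mlp_product_net by blast
qed

section \<open>Accumulation of the errors\<close>

lemma abs_nest_mlp_sub_prod_le:
  fixes \<Phi> :: "real^('e::finite + 'e) \<Rightarrow> real^'e" and G :: "nat \<Rightarrow> real^'e"
  assumes \<Phi>: "\<And>u w j. \<bar>u$j\<bar> \<le> M \<Longrightarrow> \<bar>w$j\<bar> \<le> M \<Longrightarrow> \<bar>\<Phi> (vconcat u w) $ j - u$j * w$j\<bar> \<le> \<delta>"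
    and G: "\<And>t j. t \<in> {1..T} \<Longrightarrow> \<bar>G t $ j\<bar> \<le> B" and "1 \<le> B" "0 \<le> \<delta>"
    and M: "B ^ T + real T * \<delta> * B ^ T \<le> M"
    and "t \<le> T"
  shows "\<bar>nest_mlp \<Phi> G t $ j - (\<Prod>s\<in>{1..t}. G s $ j)\<bar> \<le> real t * \<delta> * B ^ t"
  using \<open>t \<le> T\<close>
proof (induction t arbitrary: j)
  case 0
  then show ?case by simp
next
  case (Suc t)
  define x where "x = G (Suc t) $ j"
  define q where "q = nest_mlp \<Phi> G t $ j"
  define p where "p = (\<Prod>s\<in>{1..t}. G s $ j)"
  have IH: "\<bar>q - p\<bar> \<le> real t * \<delta> * B ^ t" unfolding q_def p_def using Suc by simp
  have "B ^ t \<le> B ^ T" "B ^ 1 \<le> B ^ T" using \<open>1 \<le> B\<close> Suc.prems by (intro power_increasing; simp)+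
  have "\<bar>p\<bar> \<le> B ^ t"
    unfolding p_def abs_prod using G Suc.prems \<open>1 \<le> B\<close> by (intro prod_le_power) auto
  moreover have "real t * \<delta> * B ^ t \<le> real T * \<delta> * B ^ T"
    using Suc.prems \<open>0 \<le> \<delta>\<close> \<open>1 \<le> B\<close> \<open>B ^ t \<le> B ^ T\<close> by (intro mult_mono) auto
  ultimately have "\<bar>q\<bar> \<le> M" using IH M \<open>B ^ t \<le> B ^ T\<close> by linarith
  have "\<bar>x\<bar> \<le> B" unfolding x_def using G Suc.prems by simp
  moreover have "0 \<le> real T * \<delta> * B ^ T" using \<open>0 \<le> \<delta>\<close> \<open>1 \<le> B\<close> by simp
  ultimately have "\<bar>x\<bar> \<le> M" using M \<open>B ^ 1 \<le> B ^ T\<close> by simp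
  define y where "y = \<Phi> (vconcat (G (Suc t)) (nest_mlp \<Phi> G t)) $ j"
  have "\<bar>y - x * q\<bar> \<le> \<delta>"
    unfolding y_def x_def q_def by (rule \<Phi>) (use \<open>\<bar>x\<bar> \<le> M\<close> \<open>\<bar>q\<bar> \<le> M\<close> in \<open>simp_all add: x_def q_def\<close>)
  have "y - x * p = (y - x * q) + x * (q - p)" by (simp add: algebra_simps)
  then have "\<bar>y - x * p\<bar> \<le> \<bar>y - x * q\<bar> + \<bar>x\<bar> * \<bar>q - p\<bar>"
    using abs_triangle_ineq[of "y - x * q" "x * (q - p)"] by (simp only: abs_mult)
  also have "\<dots> \<le> \<delta> + B * (real t * \<delta> * B ^ t)"
    using \<open>\<bar>y - x * q\<bar> \<le> \<delta>\<close> IH \<open>\<bar>x\<bar> \<le> B\<close> \<open>1 \<le> B\<close> by (intro add_mono mult_mono) auto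
  also have "\<dots> \<le> real (Suc t) * \<delta> * B ^ Suc t"
    using mult_left_mono[OF one_le_power[OF \<open>1 \<le> B\<close>, of "Suc t"] \<open>0 \<le> \<delta>\<close>]
    by (simp add: algebra_simps)
  finally have "\<bar>y - x * p\<bar> \<le> real (Suc t) * \<delta> * B ^ Suc t" .
  moreover have "nest_mlp \<Phi> G (Suc t) $ j = y" "(\<Prod>s\<in>{1..Suc t}. G s $ j) = x * p"
    unfolding y_def x_def p_def by (simp_all add: prod.nat_ivl_Suc')
  ultimately show ?case by simp
qed

lemma exists_accumulated_error_le:
  fixes B c \<epsilon> :: real
  assumes "1 \<le> B" "0 \<le> c" "0 < \<epsilon>"
  obtains \<delta> where "0 < \<delta>" "real T * \<delta> * B ^ T \<le> 1" "c * (real T * \<delta> * B ^ T) \<le> \<epsilon>"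
proof -
  define \<delta> where "\<delta> = min 1 \<epsilon> / ((c + 1) * (real T * B ^ T + 1))"
  have "0 < real T * B ^ T + 1" using \<open>1 \<le> B\<close> by (simp add: add_nonneg_pos)
  then have "0 < \<delta>" unfolding \<delta>_def using assms by (intro divide_pos_pos mult_pos_pos) auto
  have "real T * \<delta> * B ^ T \<le> \<delta> * (real T * B ^ T + 1)" using \<open>0 < \<delta>\<close> by (simp add: algebra_simps)
  also have "\<dots> = min 1 \<epsilon> / (c + 1)" unfolding \<delta>_def using \<open>0 < real T * B ^ T + 1\<close> by simp
  finally have "real T * \<delta> * B ^ T * (c + 1) \<le> min 1 \<epsilon>" using \<open>0 \<le> c\<close> by (simp add: field_simps)
  moreover have "0 \<le> c * (real T * \<delta> * B ^ T)" "0 \<le> real T * \<delta> * B ^ T"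
    using assms \<open>0 < \<delta>\<close> by simp_all
  ultimately show ?thesis using that \<open>0 < \<delta>\<close> by (simp add: algebra_simps)
qed

lemma norm_sum_sub_sum_le:
  fixes a b :: "'i \<Rightarrow> real^'n::finite"
  assumes "\<And>i j. i \<in> A \<Longrightarrow> \<bar>a i $ j - b i $ j\<bar> \<le> \<eta>"
  shows "norm ((\<Sum>i\<in>A. a i) - (\<Sum>i\<in>A. b i)) \<le> real (card A) * (real CARD('n) * \<eta>)"
proof -
  have "norm (a i - b i) \<le> real CARD('n) * \<eta>" if "i \<in> A" for i
  proof -
    have "norm (a i - b i) \<le> (\<Sum>j\<in>UNIV. \<bar>(a i - b i) $ j\<bar>)" by (rule norm_le_l1_cart)
    also have "\<dots> \<le> (\<Sum>j\<in>(UNIV :: 'n set). \<eta>)" using assms[OF that] by (intro sum_mono) simp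
    finally show ?thesis by simp
  qed
  then have "(\<Sum>i\<in>A. norm (a i - b i)) \<le> real (card A) * (real CARD('n) * \<eta>)"
    using sum_bounded_above[of A "\<lambda>i. norm (a i - b i)"] by simp
  moreover have "norm (\<Sum>i\<in>A. a i - b i) \<le> (\<Sum>i\<in>A. norm (a i - b i))" by (rule norm_sum)
  ultimately show ?thesis by (simp add: sum_subtractf)
qed

theorem lemmaB3:
  fixes \<Omega> :: "(real^'d::finite) set"
    and T N :: nat
    and FA :: "nat \<Rightarrow> nat \<Rightarrow> real^'d^'e::finite"
    and Fb :: "nat \<Rightarrow> nat \<Rightarrow> real^'e"
    and \<theta> :: "nat \<Rightarrow> nat \<Rightarrow> 'e attn_params"
    and \<epsilon> :: real
  assumes "compact \<Omega>"
    and "\<epsilon> > 0"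
  defines "g \<equiv> (\<lambda>t n \<mu> x. Gamma_diamond (\<theta> t n) (\<lambda>z. FA t n *v z + Fb t n) \<mu> x)"
  shows "\<exists>\<Phi> :: real^('e + 'e) \<Rightarrow> real^'e. is_mlp \<Phi> \<and>
           (\<forall>\<mu> x. prob_on \<Omega> \<mu> \<longrightarrow> x \<in> \<Omega> \<longrightarrow>
              norm ((\<Sum>n\<in>{1..N}. (\<chi> i. \<Prod>t\<in>{1..T}. g t n \<mu> x $ i))
                    - (\<Sum>n\<in>{1..N}. nest_mlp \<Phi> (\<lambda>t. g t n \<mu> x) T)) \<le> \<epsilon>)"
proof -
  obtain B where "1 \<le> B" and g_bound: "\<And>t n \<mu> x j. t \<in> {1..T} \<Longrightarrow> n \<in> {1..N} \<Longrightarrow>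
      prob_on \<Omega> \<mu> \<Longrightarrow> x \<in> \<Omega> \<Longrightarrow> \<bar>g t n \<mu> x $ j\<bar> \<le> B"
    unfolding g_def by (rule Gamma_diamond_affine_uniform_bound[OF \<open>compact \<Omega>\<close>, of T N \<theta> FA Fb]) blast
  obtain \<delta> where "0 < \<delta>" "real T * \<delta> * B ^ T \<le> 1"
    and small: "real N * real CARD('e) * (real T * \<delta> * B ^ T) \<le> \<epsilon>"
    using exists_accumulated_error_le[OF \<open>1 \<le> B\<close> _ \<open>\<epsilon> > 0\<close>, of "real N * real CARD('e)" T] by auto
  obtain \<Phi> :: "real^('e + 'e) \<Rightarrow> real^'e" where "is_mlp \<Phi>" and \<Phi>:
      "\<And>u w j. \<bar>u$j\<bar> \<le> B ^ T + 1 \<Longrightarrow> \<bar>w$j\<bar> \<le> B ^ T + 1 \<Longrightarrow> \<bar>\<Phi> (vconcat u w) $ j - u$j * w$j\<bar> \<le> \<delta>"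
    using exists_mlp_approx_product[of "B ^ T + 1" \<delta>] \<open>0 < \<delta>\<close> \<open>1 \<le> B\<close> by auto
  have product_error: "\<bar>(\<Prod>t\<in>{1..T}. g t n \<mu> x $ j) - nest_mlp \<Phi> (\<lambda>t. g t n \<mu> x) T $ j\<bar> \<le> real T * \<delta> * B ^ T"
    if "prob_on \<Omega> \<mu>" "x \<in> \<Omega>" "n \<in> {1..N}" for \<mu> x n j
    using abs_nest_mlp_sub_prod_le[where T = T, OF \<Phi> g_bound[OF _ that(3,1,2)] \<open>1 \<le> B\<close>]
      \<open>0 < \<delta>\<close> \<open>real T * \<delta> * B ^ T \<le> 1\<close> by (simp add: abs_minus_commute)
  show ?thesis
  proof (intro exI conjI allI impI)
    fix \<mu> x assume "prob_on \<Omega> \<mu>" "x \<in> \<Omega>"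
    have "norm ((\<Sum>n\<in>{1..N}. (\<chi> i. \<Prod>t\<in>{1..T}. g t n \<mu> x $ i))
                    - (\<Sum>n\<in>{1..N}. nest_mlp \<Phi> (\<lambda>t. g t n \<mu> x) T))
        \<le> real (card {1..N}) * (real CARD('e) * (real T * \<delta> * B ^ T))"
      by (rule norm_sum_sub_sum_le, unfold vec_lambda_beta)
         (erule product_error[OF \<open>prob_on \<Omega> \<mu>\<close> \<open>x \<in> \<Omega>\<close>])
    then show "norm ((\<Sum>n\<in>{1..N}. (\<chi> i. \<Prod>t\<in>{1..T}. g t n \<mu> x $ i))
                    - (\<Sum>n\<in>{1..N}. nest_mlp \<Phi> (\<lambda>t. g t n \<mu> x) T)) \<le> \<epsilon>"
      using small by (simp add: mult.assoc)
  qed (rule \<open>is_mlp \<Phi>\<close>)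
qed

end
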